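(* Let $n,k\ge 1$ and let $\mathfrak{a}\in\mathcal{A}_n^k$ be such that $\mathrm{Der}_k(\mathfrak{a})$ is nonempty. Then: 1) $t_1(\mathfrak{a})=t_2(\mathfrak{a})$, and, listing the slots of type I or type II in increasing order of their index, their types alternate, beginning with a slot of type I; 2) $\mathrm{des}(\mathfrak{a})=\mathrm{des}(\mathrm{Der}_k(\mathfrak{a}))+t_1^{+}(\mathfrak{a})+t_3^{+}(\mathfrak{a})$ and $\mathrm{dez}(\mathfrak{a})=\mathrm{des}(\mathrm{Der}_k(\mathfrak{a}))+t_2^{+}(\mathfrak{a})+t_3^{+}(\mathfrak{a})$.
   Context: $\mathfrak{S}_n$ is the set of permutations of $[n]=\{1,\dots,n\}$; $\mathrm{FIX}(\pi)=\{i:\pi(i)=i\}$. For $k\ge1$, a $k$-arrangement of $[n]$ is a pair $\mathfrak{a}=(\pi,\phi)$ with $\pi\in\mathfrak{S}_n$ and $\phi:\mathrm{FIX}(\pi)\to\{-1,\dots,-k\}$ arbitrary; $\mathcal{A}_n^k$ is the set of them. The positive reduction of an integer word replaces every occurrence of its $i$-th smallest positive letter by $i$ (negative letters unchanged). The derangement form $\mathrm{df}_k(\mathfrak{a})$ is obtained from $\pi(1)\cdots\pi(n)$ by replacing $\pi(i)$ with $\phi(i)$ for each $i\in\mathrm{FIX}(\pi)$ and then applying positive reduction; the permutation form $\mathrm{pf}_k(\mathfrak{a})$ is obtained likewise, replacing only for $i\in\mathrm{FIX}(\pi)$ with $\phi(i)\ne-k$. For an integer word $w=w_1\cdots w_n$,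 $\mathrm{des}(w)=|\{i\in[n-1]:w_i>w_{i+1}\}|$; $\mathrm{des}(\mathfrak{a})=\mathrm{des}(\mathrm{pf}_k(\mathfrak{a}))$ and $\mathrm{dez}(\mathfrak{a})=\mathrm{des}(\mathrm{df}_k(\mathfrak{a}))$. The weak derangement part $\mathrm{Der}_k(\mathfrak{a})$ is the word obtained from $\mathrm{df}_k(\mathfrak{a})$ by deleting all letters $-k$; say it is $w=w_1\cdots w_m$. It is the derangement form of a unique $k$-arrangement $(\sigma,\phi')$ of $[m]$ with $\phi'$ never taking the value $-k$; its excedance word is $\mathbf{e}(w)=e_1\cdots e_m$ where $e_j=E$ if $\sigma(j)>j$ and $e_j=N$ if $\sigma(j)\le j$. (Equivalently, if $w_j$ comes from the letter at position $i_j$ of $\pi$, then $e_j=E$ iff $\pi(i_j)>i_j$.) Write $\mathrm{df}_k(\mathfrak{a})=S_0w_1S_1w_2\cdots S_{m-1}w_mS_m$, where each slot $S_i$ ($0\le i\le m$) is a possibly empty block of letters $-k$. Set $w_0=w_{m+1}=+\infty$ and $e_0=e_{m+1}=E$. The slot $S_i$ is of type I if $w_i>w_{i+1}$ and $(e_i,e_{i+1})=(E,N)$; type II if $w_i\le w_{i+1}$ and $(e_i,e_{i+1})=(N,E)$; type III if $w_i\le w_{i+1}$ and $(e_i,e_{i+1})\ne(N,E)$; type IV if $w_i>w_{i+1}$ and $(e_i,e_{i+1})\ne(E,N)$. $t_j(\mathfrak{a})$ is the number of slots (empty or not) of type $j$ ($j=1,2,3,4$ for I, II, III, IV), and $t_j^+(\mathfrak{a})$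 the number of nonempty slots of type $j$. *)

theory Defs
  imports "HOL-Combinatorics.Permutations" "HOL-Library.Extended_Real"
begin

text \<open>Words are lists of integers; positions in words are 0-based, elements of [n] are 1..n.
 A k-arrangement of [n] is (pi, phi) with pi permuting {1..n} and phi mapping each fixed point
 of pi into {-k..-1} (values of phi outside FIX(pi) are irrelevant).\<close>

definition is_arrangement :: "nat \<Rightarrow> nat \<Rightarrow> (nat \<Rightarrow> nat) \<Rightarrow> (nat \<Rightarrow> int) \<Rightarrow> bool" where
  "is_arrangement n k \<pi> \<phi> \<longleftrightarrow> \<pi> permutes {1..n} \<and>
     (\<forall>i\<in>{1..n}. \<pi> i = i \<longrightarrow> - int k \<le> \<phi> i \<and> \<phi> i \<le> -1)"

definition pos_red :: "int list \<Rightarrow> int list" where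
  "pos_red w = map (\<lambda>x. if 0 < x then int (card {y \<in> set w. 0 < y \<and> y \<le> x}) else x) w"

definition des_word :: "int list \<Rightarrow> nat" where
  "des_word w = card {i. Suc i < length w \<and> w ! i > w ! Suc i}"

definition df :: "nat \<Rightarrow> nat \<Rightarrow> (nat \<Rightarrow> nat) \<Rightarrow> (nat \<Rightarrow> int) \<Rightarrow> int list" where
  "df n k \<pi> \<phi> = pos_red (map (\<lambda>i. if \<pi> i = i then \<phi> i else int (\<pi> i)) [1..<n+1])"

definition pf :: "nat \<Rightarrow> nat \<Rightarrow> (nat \<Rightarrow> nat) \<Rightarrow> (nat \<Rightarrow> int) \<Rightarrow> int list" where
  "pf n k \<pi> \<phi> = pos_red (map (\<lambda>i. if \<pi> i = i \<and> \<phi> i \<noteq> - int k then \<phi> i else int (\<pi> i)) [1..<n+1])"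

definition des_arr :: "nat \<Rightarrow> nat \<Rightarrow> (nat \<Rightarrow> nat) \<Rightarrow> (nat \<Rightarrow> int) \<Rightarrow> nat" where
  "des_arr n k \<pi> \<phi> = des_word (pf n k \<pi> \<phi>)"

definition dez_arr :: "nat \<Rightarrow> nat \<Rightarrow> (nat \<Rightarrow> nat) \<Rightarrow> (nat \<Rightarrow> int) \<Rightarrow> nat" where
  "dez_arr n k \<pi> \<phi> = des_word (df n k \<pi> \<phi>)"

definition kept_pos :: "nat \<Rightarrow> nat \<Rightarrow> (nat \<Rightarrow> nat) \<Rightarrow> (nat \<Rightarrow> int) \<Rightarrow> nat list" where
  "kept_pos n k \<pi> \<phi> = (let d = df n k \<pi> \<phi> in filter (\<lambda>j. d ! j \<noteq> - int k) [0..<length d])"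

definition Der :: "nat \<Rightarrow> nat \<Rightarrow> (nat \<Rightarrow> nat) \<Rightarrow> (nat \<Rightarrow> int) \<Rightarrow> int list" where
  "Der n k \<pi> \<phi> = filter (\<lambda>x. x \<noteq> - int k) (df n k \<pi> \<phi>)"

text \<open>Excedance word of Der (True = E, False = N): the letter w_j comes from position
 i_j = (kept_pos ! (j-1)) + 1 of pi, and e_j = E iff pi(i_j) > i_j.\<close>
definition exc_word :: "nat \<Rightarrow> nat \<Rightarrow> (nat \<Rightarrow> nat) \<Rightarrow> (nat \<Rightarrow> int) \<Rightarrow> bool list" where
  "exc_word n k \<pi> \<phi> = map (\<lambda>j. \<pi> (Suc j) > Suc j) (kept_pos n k \<pi> \<phi>)"

definition wext :: "nat \<Rightarrow> nat \<Rightarrow> (nat \<Rightarrow> nat) \<Rightarrow> (nat \<Rightarrow> int) \<Rightarrow> nat \<Rightarrow> ereal" where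
  "wext n k \<pi> \<phi> i = (let w = Der n k \<pi> \<phi> in
     if i = 0 \<or> i = length w + 1 then \<infinity> else ereal (real_of_int (w ! (i - 1))))"

definition eext :: "nat \<Rightarrow> nat \<Rightarrow> (nat \<Rightarrow> nat) \<Rightarrow> (nat \<Rightarrow> int) \<Rightarrow> nat \<Rightarrow> bool" where
  "eext n k \<pi> \<phi> i = (let e = exc_word n k \<pi> \<phi> in
     if i = 0 \<or> i = length e + 1 then True else e ! (i - 1))"

text \<open>Slot S_i (0 \<le> i \<le> m) is nonempty iff there is a letter -k strictly between w_i and w_{i+1}
 in df (w_0 sits before position 0, w_{m+1} after the last position).
 pext i is the 1-based position of w_i in df, with pext 0 = 0 and pext (m+1) = n+1.\<close>
definition pext :: "nat \<Rightarrow> nat \<Rightarrow> (nat \<Rightarrow> nat) \<Rightarrow> (nat \<Rightarrow> int) \<Rightarrow> nat \<Rightarrow> nat" where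
  "pext n k \<pi> \<phi> i = (let p = kept_pos n k \<pi> \<phi> in
     if i = 0 then 0 else if i = length p + 1 then length (df n k \<pi> \<phi>) + 1 else Suc (p ! (i - 1)))"

definition slot_nonempty :: "nat \<Rightarrow> nat \<Rightarrow> (nat \<Rightarrow> nat) \<Rightarrow> (nat \<Rightarrow> int) \<Rightarrow> nat \<Rightarrow> bool" where
  "slot_nonempty n k \<pi> \<phi> i \<longleftrightarrow> Suc (pext n k \<pi> \<phi> i) < pext n k \<pi> \<phi> (Suc i)"

definition slot_type :: "nat \<Rightarrow> nat \<Rightarrow> (nat \<Rightarrow> nat) \<Rightarrow> (nat \<Rightarrow> int) \<Rightarrow> nat \<Rightarrow> nat" where
  "slot_type n k \<pi> \<phi> i = (let w = wext n k \<pi> \<phi>; e = eext n k \<pi> \<phi> in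
     if w i > w (Suc i) \<and> e i \<and> \<not> e (Suc i) then 1
     else if w i \<le> w (Suc i) \<and> \<not> e i \<and> e (Suc i) then 2
     else if w i \<le> w (Suc i) then 3
     else 4)"

definition slots :: "nat \<Rightarrow> nat \<Rightarrow> (nat \<Rightarrow> nat) \<Rightarrow> (nat \<Rightarrow> int) \<Rightarrow> nat set" where
  "slots n k \<pi> \<phi> = {0..length (Der n k \<pi> \<phi>)}"

definition t_cnt :: "nat \<Rightarrow> nat \<Rightarrow> nat \<Rightarrow> (nat \<Rightarrow> nat) \<Rightarrow> (nat \<Rightarrow> int) \<Rightarrow> nat" where
  "t_cnt j n k \<pi> \<phi> = card {i \<in> slots n k \<pi> \<phi>. slot_type n k \<pi> \<phi> i = j}"

definition t_plus :: "nat \<Rightarrow> nat \<Rightarrow> nat \<Rightarrow> (nat \<Rightarrow> nat) \<Rightarrow> (nat \<Rightarrow> int) \<Rightarrow> nat" where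
  "t_plus j n k \<pi> \<phi> = card {i \<in> slots n k \<pi> \<phi>. slot_type n k \<pi> \<phi> i = j \<and> slot_nonempty n k \<pi> \<phi> i}"

definition slots12 :: "nat \<Rightarrow> nat \<Rightarrow> (nat \<Rightarrow> nat) \<Rightarrow> (nat \<Rightarrow> int) \<Rightarrow> nat list" where
  "slots12 n k \<pi> \<phi> = filter (\<lambda>i. slot_type n k \<pi> \<phi> i \<in> {1, 2}) [0..<length (Der n k \<pi> \<phi>) + 1]"

end

theory Submission
  imports Defs
begin

(* Between two consecutive letters of the weak derangement part there are only fixed points
   labelled -k.  Fixed points are never values of non-fixed points, so the value of a kept
   excedance jumps over the whole following slot and the value of a kept non-fixed deficiency
   lies before the whole preceding slot.  Hence an (E,N) pair of neighbouring kept letters is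
   a descent of Der and an (N,E) pair an ascent: types I and II are the falls and rises of the
   excedance word, which alternate starting with a fall because e_0 = e_(m+1) = E.
   For the descents, cut df and pf at the kept letters.  In df a nonempty slot is a run of the
   minimal letter -k, which creates exactly one descent, at its left end (except for S_0).  In
   pf it is an increasing run of fixed points i carrying the letter i, with a descent at its left
   end iff the left neighbour is an excedance and at its right end iff the right neighbour is
   not.  Comparing slot by slot with the descent of Der across the slot gives the formulas. *)

lemma des_word_map_strict_mono_on:
  assumes "strict_mono_on (set w) f"
  shows "des_word (map f w) = des_word w"
proof -
  have "f (w ! Suc i) < f (w ! i) \<longleftrightarrow> w ! Suc i < w ! i" if "Suc i < length w" for i
    using that by (intro strict_mono_on_less[OF assms]) auto
  then show ?thesis
    unfolding des_word_def by (auto intro!: arg_cong[where f=card])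
qed

definition descent_positions :: "nat \<Rightarrow> (nat \<Rightarrow> int) \<Rightarrow> nat set" where
  "descent_positions n g = {x. 1 \<le> x \<and> x < n \<and> g (Suc x) < g x}"

lemma descent_positions_subset: "descent_positions n g \<subseteq> {1..<n}"
  unfolding descent_positions_def by auto

lemma des_word_map_upt: "des_word (map g [1..<n+1]) = card (descent_positions n g)"
proof -
  have "des_word (map g [1..<n+1]) = card {i. Suc i < n \<and> g (Suc (Suc i)) < g (Suc i)}"
    unfolding des_word_def by (auto simp del: upt_Suc intro!: arg_cong[where f=card])
  also have "\<dots> = card (Suc ` {i. Suc i < n \<and> g (Suc (Suc i)) < g (Suc i)})"
    by (simp add: card_image)
  also have "Suc ` {i. Suc i < n \<and> g (Suc (Suc i)) < g (Suc i)} = descent_positions n g"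
  proof (intro set_eqI iffI)
    fix x assume "x \<in> descent_positions n g"
    then show "x \<in> Suc ` {i. Suc i < n \<and> g (Suc (Suc i)) < g (Suc i)}"
      unfolding descent_positions_def by (intro image_eqI[where x="x - 1"]) auto
  qed (auto simp: descent_positions_def)
  finally show ?thesis .
qed

definition pos_rank :: "int list \<Rightarrow> int \<Rightarrow> int" where
  "pos_rank w x = (if 0 < x then int (card {y \<in> set w. 0 < y \<and> y \<le> x}) else x)"

lemma pos_red_eq_map_pos_rank: "pos_red w = map (pos_rank w) w"
  unfolding pos_red_def pos_rank_def by simp

lemma pos_rank_nonpos: "x \<le> 0 \<Longrightarrow> pos_rank w x = x"
  unfolding pos_rank_def by simp

lemma pos_rank_pos:
  assumes "x \<in> set w" "0 < x"
  shows "0 < pos_rank w x"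
proof -
  have "x \<in> {y \<in> set w. 0 < y \<and> y \<le> x}" using assms by simp
  then have "card {y \<in> set w. 0 < y \<and> y \<le> x} > 0"
    by (auto simp: card_gt_0_iff)
  then show ?thesis using assms(2) unfolding pos_rank_def by simp
qed

lemma strict_mono_on_pos_rank: "strict_mono_on (set w) (pos_rank w)"
proof (rule strict_mono_onI)
  fix x y assume xy: "x \<in> set w" "y \<in> set w" "x < y"
  show "pos_rank w x < pos_rank w y"
  proof (cases "0 < x")
    case True
    have "{z \<in> set w. 0 < z \<and> z \<le> x} \<subseteq> {z \<in> set w. 0 < z \<and> z \<le> y}"
      using xy by auto
    moreover have "y \<in> {z \<in> set w. 0 < z \<and> z \<le> y} - {z \<in> set w. 0 < z \<and> z \<le> x}"
      using xy True by simp
    ultimately have "{z \<in> set w. 0 < z \<and> z \<le> x} \<subset> {z \<in> set w. 0 < z \<and> z \<le> y}"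
      by blast
    then have "card {z \<in> set w. 0 < z \<and> z \<le> x} < card {z \<in> set w. 0 < z \<and> z \<le> y}"
      by (intro psubset_card_mono) simp_all
    then show ?thesis using True xy(3) unfolding pos_rank_def by simp
  next
    case False
    then show ?thesis
      using xy pos_rank_pos[OF xy(2)] by (cases "0 < y") (simp_all add: pos_rank_nonpos)
  qed
qed

lemma des_word_pos_red: "des_word (pos_red w) = des_word w"
  unfolding pos_red_eq_map_pos_rank
  by (rule des_word_map_strict_mono_on) (rule strict_mono_on_pos_rank)

lemma sum_of_bool_lessThan: "(\<Sum>t<i. of_bool (Q t) :: nat) = card {t. t < (i::nat) \<and> Q t}"
proof -
  have "(\<Sum>t<i. of_bool (Q t) :: nat) = card ({..<i} \<inter> {t. Q t})"
    by simp
  also have "{..<i} \<inter> {t. Q t} = {t. t < i \<and> Q t}"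
    by auto
  finally show ?thesis .
qed

lemma card_falls_eq_card_rises:
  assumes "e 0" and "e N"
  shows "card {t. t < N \<and> e t \<and> \<not> e (Suc t)} = card {t. t < N \<and> \<not> e t \<and> e (Suc t)}"
proof -
  have "(\<Sum>t<i. of_bool (e t \<and> \<not> e (Suc t)) :: nat)
      = (\<Sum>t<i. of_bool (\<not> e t \<and> e (Suc t))) + of_bool (\<not> e i)" for i
    by (induction i) (use assms(1) in auto)
  from this[of N] show ?thesis
    using assms(2) by (simp only: sum_of_bool_lessThan) simp
qed

lemma even_card_changes_iff:
  assumes "e 0"
  shows "e i \<longleftrightarrow> even (card {t. t < i \<and> e t \<noteq> e (Suc t)})"
proof -
  have "e i \<longleftrightarrow> even (\<Sum>t<i. of_bool (e t \<noteq> e (Suc t)) :: nat)"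
    by (induction i) (use assms in auto)
  then show ?thesis by (simp only: sum_of_bool_lessThan)
qed

lemma card_Int_atLeastLessThan_split:
  fixes P :: "nat \<Rightarrow> nat"
  assumes "mono_on {..Suc m} P"
  shows "card (A \<inter> {P 0..<P (Suc m)}) = (\<Sum>i\<le>m. card (A \<inter> {P i..<P (Suc i)}))"
  using assms
proof (induction m)
  case 0
  show ?case by simp
next
  case (Suc m)
  have le: "P 0 \<le> P (Suc m)" "P (Suc m) \<le> P (Suc (Suc m))"
    using mono_onD[OF Suc.prems] by auto
  have "A \<inter> {P 0..<P (Suc (Suc m))}
      = A \<inter> {P 0..<P (Suc m)} \<union> A \<inter> {P (Suc m)..<P (Suc (Suc m))}"
    using le by auto
  then have "card (A \<inter> {P 0..<P (Suc (Suc m))})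
      = card (A \<inter> {P 0..<P (Suc m)}) + card (A \<inter> {P (Suc m)..<P (Suc (Suc m))})"
    by (simp add: card_Un_disjoint disjoint_iff)
  moreover have "mono_on {..Suc m} P"
    using Suc.prems by (rule mono_on_subset) auto
  ultimately show ?case using Suc.IH by simp
qed

lemma card_less_filter_upt_nth:
  assumes "j < length (filter Q [0..<N])"
  shows "card {t. t < filter Q [0..<N] ! j \<and> Q t} = j"
  using assms
proof (induction N arbitrary: j)
  case 0
  then show ?case by simp
next
  case (Suc N)
  show ?case
  proof (cases "j < length (filter Q [0..<N])")
    case True
    then show ?thesis using Suc by (auto simp: nth_append)
  next
    case False
    then have "Q N" "j = length (filter Q [0..<N])"
      using Suc.prems by (auto split: if_splits)
    moreover have "{i. i < N \<and> Q ([0..<N] ! i)} = {t. t < N \<and> Q t}"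
      by auto
    then have "length (filter Q [0..<N]) = card {t. t < N \<and> Q t}"
      by (simp add: length_filter_conv_card)
    ultimately show ?thesis by (simp add: nth_append)
  qed
qed

lemma filter_eq_map_nth_filter_upt:
  "filter Q xs = map ((!) xs) (filter (\<lambda>j. Q (xs ! j)) [0..<length xs])"
proof -
  have "filter Q xs = filter Q (map ((!) xs) [0..<length xs])"
    by (simp add: map_nth)
  then show ?thesis
    by (simp add: filter_map comp_def)
qed

lemma card_doubleton_Int:
  "a \<noteq> b \<Longrightarrow> card ({a, b} \<inter> A) = of_bool (a \<in> A) + of_bool (b \<in> A)"
  by (cases "a \<in> A"; cases "b \<in> A") (auto simp: Int_insert_left)

lemma card_singleton_Int: "card ({a} \<inter> A) = of_bool (a \<in> A)"
  by (simp add: Int_insert_left)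

locale arrangement =
  fixes n k :: nat and \<pi> :: "nat \<Rightarrow> nat" and \<phi> :: "nat \<Rightarrow> int"
  assumes k_pos: "1 \<le> k"
    and is_arr: "is_arrangement n k \<pi> \<phi>"
    and Der_nonempty: "Der n k \<pi> \<phi> \<noteq> []"
begin

definition df_letter :: "nat \<Rightarrow> int" where
  "df_letter x = (if \<pi> x = x then \<phi> x else int (\<pi> x))"

definition pf_letter :: "nat \<Rightarrow> int" where
  "pf_letter x = (if \<pi> x = x \<and> \<phi> x \<noteq> - int k then \<phi> x else int (\<pi> x))"

definition deleted :: "nat \<Rightarrow> bool" where
  "deleted x \<longleftrightarrow> \<pi> x = x \<and> \<phi> x = - int k"

definition df_letters :: "int list" where
  "df_letters = map df_letter [1..<n+1]"

abbreviation "kp \<equiv> kept_pos n k \<pi> \<phi>"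
abbreviation "m \<equiv> length kp"
abbreviation "pos \<equiv> pext n k \<pi> \<phi>"
abbreviation "e \<equiv> eext n k \<pi> \<phi>"
abbreviation "w \<equiv> wext n k \<pi> \<phi>"
abbreviation "ty \<equiv> slot_type n k \<pi> \<phi>"
abbreviation "nonempty \<equiv> slot_nonempty n k \<pi> \<phi>"
abbreviation "der_descents \<equiv> descent_positions m (\<lambda>i. df_letter (pos i))"

lemma permutes: "\<pi> permutes {1..n}"
  using is_arr unfolding is_arrangement_def by simp

lemma phi_bounds: "1 \<le> x \<Longrightarrow> x \<le> n \<Longrightarrow> \<pi> x = x \<Longrightarrow> - int k \<le> \<phi> x \<and> \<phi> x \<le> -1"
  using is_arr unfolding is_arrangement_def by simp

lemma not_deleted_image: "\<pi> x \<noteq> x \<Longrightarrow> \<not> deleted (\<pi> x)"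
  using permutes_inj[OF permutes] unfolding deleted_def by (metis injD)

lemma df_eq: "df n k \<pi> \<phi> = pos_red df_letters"
  unfolding df_def df_letters_def df_letter_def[abs_def] ..

lemma pf_eq: "pf n k \<pi> \<phi> = pos_red (map pf_letter [1..<n+1])"
  unfolding pf_def pf_letter_def[abs_def] ..

lemma length_df: "length (df n k \<pi> \<phi>) = n"
  by (simp add: df_eq pos_red_def df_letters_def)

lemma df_letter_in_df_letters: "1 \<le> x \<Longrightarrow> x \<le> n \<Longrightarrow> df_letter x \<in> set df_letters"
  unfolding df_letters_def by (simp del: upt_Suc)

lemma df_nth: "j < n \<Longrightarrow> df n k \<pi> \<phi> ! j = pos_rank df_letters (df_letter (Suc j))"
  unfolding df_eq pos_red_eq_map_pos_rank by (simp add: df_letters_def del: upt_Suc)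

lemma df_letter_eq_neg_k_iff: "df_letter x = - int k \<longleftrightarrow> deleted x"
  using k_pos unfolding df_letter_def deleted_def by auto

lemma df_nth_eq_neg_k_iff:
  assumes "j < n"
  shows "df n k \<pi> \<phi> ! j = - int k \<longleftrightarrow> deleted (Suc j)"
proof -
  have v: "df_letter (Suc j) \<in> set df_letters"
    using assms by (intro df_letter_in_df_letters) auto
  have "pos_rank df_letters (df_letter (Suc j)) = - int k \<longleftrightarrow> df_letter (Suc j) = - int k"
    using pos_rank_pos[OF v] pos_rank_nonpos[of "df_letter (Suc j)" df_letters]
    by (cases "0 < df_letter (Suc j)") auto
  then show ?thesis
    using df_nth[OF assms] df_letter_eq_neg_k_iff by simp
qed

lemma kept_pos_eq: "kp = filter (\<lambda>j. \<not> deleted (Suc j)) [0..<n]"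
  unfolding kept_pos_def Let_def length_df by (rule filter_cong) (auto simp: df_nth_eq_neg_k_iff)

lemma Der_eq: "Der n k \<pi> \<phi> = map (nth (df n k \<pi> \<phi>)) kp"
  unfolding Der_def kept_pos_def Let_def by (rule filter_eq_map_nth_filter_upt)

lemma length_Der: "length (Der n k \<pi> \<phi>) = m"
  by (simp add: Der_eq)

lemma m_pos: "0 < m"
  using Der_nonempty length_Der by auto

lemma kept_pos_less: "t < m \<Longrightarrow> kp ! t < n"
  using nth_mem[of t kp] unfolding kept_pos_eq by (simp del: upt_Suc)

lemma pos_0: "pos 0 = 0"
  unfolding pext_def by simp

lemma pos_Suc_m: "pos (Suc m) = Suc n"
  unfolding pext_def Let_def length_df by simp

lemma pos_kept: "1 \<le> i \<Longrightarrow> i \<le> m \<Longrightarrow> pos i = Suc (kp ! (i - 1))"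
  unfolding pext_def Let_def by simp

lemma pos_bounds: "1 \<le> i \<Longrightarrow> i \<le> m \<Longrightarrow> 1 \<le> pos i \<and> pos i \<le> n"
  using pos_kept kept_pos_less by (simp add: Suc_le_eq)

lemma pos_not_deleted: "1 \<le> i \<Longrightarrow> i \<le> m \<Longrightarrow> \<not> deleted (pos i)"
  using pos_kept nth_mem[of "i - 1" kp] unfolding kept_pos_eq by (simp del: upt_Suc)

lemma pos_less: "i < j \<Longrightarrow> j \<le> Suc m \<Longrightarrow> pos i < pos j"
proof -
  assume ij: "i < j" "j \<le> Suc m"
  show ?thesis
  proof (cases "i = 0")
    case True
    then show ?thesis
      using ij pos_0 pos_Suc_m pos_bounds[of j] by (cases "j = Suc m") auto
  next
    case False
    then have i: "1 \<le> i" "i \<le> m" using ij by auto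
    show ?thesis
    proof (cases "j = Suc m")
      case True
      then show ?thesis using pos_bounds[OF i] pos_Suc_m by simp
    next
      case False
      have "sorted_wrt (<) kp"
        unfolding kept_pos_eq by (rule sorted_wrt_filter) (rule sorted_wrt_upt)
      moreover have "j \<le> m" using False ij by simp
      ultimately show ?thesis
        using i ij pos_kept[of i] pos_kept[of j] sorted_wrt_nth_less[of "(<)" kp "i - 1" "j - 1"]
        by simp
    qed
  qed
qed

lemma pos_le: "i \<le> j \<Longrightarrow> j \<le> Suc m \<Longrightarrow> pos i \<le> pos j"
  using pos_less by (cases "i = j") (auto simp: less_imp_le)

lemma deleted_inside_slot:
  assumes "i \<le> m" "pos i < x" "x < pos (Suc i)"
  shows "deleted x \<and> 1 \<le> x \<and> x \<le> n"
proof -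
  have x: "1 \<le> x" "x \<le> n"
    using assms pos_le[of "Suc i" "Suc m"] pos_Suc_m by auto
  have "deleted x"
  proof (rule ccontr)
    assume "\<not> deleted x"
    then have "x - 1 \<in> set kp" using x unfolding kept_pos_eq by simp
    then obtain t where "t < m" "kp ! t = x - 1" by (auto simp: in_set_conv_nth)
    then have t: "pos (Suc t) = x" "Suc t \<le> m" using pos_kept[of "Suc t"] x by auto
    show False
    proof (cases "Suc t \<le> i")
      case True
      then show False using pos_le[of "Suc t" i] assms t by simp
    next
      case False
      then show False using pos_le[of "Suc i" "Suc t"] assms t by simp
    qed
  qed
  with x show ?thesis by simp
qed

lemma exc_value_beyond_slot:
  "1 \<le> i \<Longrightarrow> i \<le> m \<Longrightarrow> pos i < \<pi> (pos i) \<Longrightarrow> pos (Suc i) \<le> \<pi> (pos i)"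
  using deleted_inside_slot[of i "\<pi> (pos i)"] not_deleted_image[of "pos i"] by fastforce

lemma deficiency_value_before_slot:
  "1 \<le> i \<Longrightarrow> i \<le> m \<Longrightarrow> \<pi> (pos i) < pos i \<Longrightarrow> \<pi> (pos i) \<le> pos (i - 1)"
  using deleted_inside_slot[of "i - 1" "\<pi> (pos i)"] not_deleted_image[of "pos i"] by fastforce

lemma kept_letters:
  assumes "1 \<le> i" "i \<le> m"
  shows "pf_letter (pos i) = df_letter (pos i)"
    and "\<pi> (pos i) = pos i \<Longrightarrow> df_letter (pos i) < 0"
    and "\<pi> (pos i) \<noteq> pos i \<Longrightarrow> df_letter (pos i) = int (\<pi> (pos i))"
    and "- int k < df_letter (pos i)"
  using pos_not_deleted[OF assms] pos_bounds[OF assms] phi_bounds[of "pos i"] k_pos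
  unfolding pf_letter_def df_letter_def deleted_def by auto

lemma deleted_letters: "deleted x \<Longrightarrow> df_letter x = - int k" "deleted x \<Longrightarrow> pf_letter x = int x"
  unfolding df_letter_def pf_letter_def deleted_def by auto

lemma df_letter_ge: "1 \<le> x \<Longrightarrow> x \<le> n \<Longrightarrow> - int k \<le> df_letter x"
  using phi_bounds[of x] unfolding df_letter_def by auto

lemma e_0: "e 0"
  unfolding eext_def by simp

lemma e_Suc_m: "e (Suc m)"
  unfolding eext_def Let_def exc_word_def by simp

lemma e_kept: "1 \<le> i \<Longrightarrow> i \<le> m \<Longrightarrow> e i \<longleftrightarrow> pos i < \<pi> (pos i)"
  unfolding eext_def Let_def exc_word_def using pos_kept by simp

lemma w_0: "w 0 = \<infinity>"
  unfolding wext_def by simp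

lemma w_Suc_m: "w (Suc m) = \<infinity>"
  unfolding wext_def Let_def length_Der by simp

lemma Der_nth: "t < m \<Longrightarrow> Der n k \<pi> \<phi> ! t = pos_rank df_letters (df_letter (pos (Suc t)))"
  using pos_kept[of "Suc t"] kept_pos_less by (simp add: Der_eq df_nth)

lemma w_kept: "1 \<le> i \<Longrightarrow> i \<le> m \<Longrightarrow> w i = ereal (of_int (pos_rank df_letters (df_letter (pos i))))"
  using Der_nth[of "i - 1"] unfolding wext_def Let_def length_Der by simp

lemma w_less_iff:
  assumes "1 \<le> i" "Suc i \<le> m"
  shows "w (Suc i) < w i \<longleftrightarrow> df_letter (pos (Suc i)) < df_letter (pos i)"
proof -
  have "df_letter (pos i) \<in> set df_letters" "df_letter (pos (Suc i)) \<in> set df_letters"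
    using assms df_letter_in_df_letters pos_bounds by auto
  then show ?thesis
    using assms w_kept[of i] w_kept[of "Suc i"] strict_mono_on_less[OF strict_mono_on_pos_rank]
    by simp
qed

lemma w_le_Suc_iff: "i \<le> m \<Longrightarrow> w i \<le> w (Suc i) \<longleftrightarrow> i \<noteq> 0 \<and> i \<notin> der_descents"
  using w_0 w_Suc_m w_kept[of 1] m_pos w_less_iff[of i]
  by (cases "i = 0"; cases "i = m") (auto simp: descent_positions_def not_le)

lemma fall_is_descent:
  assumes "i \<le> m" "e i" "\<not> e (Suc i)"
  shows "\<not> w i \<le> w (Suc i)"
proof (cases "i = 0")
  case False
  have "i \<noteq> m" using assms(3) e_Suc_m by metis
  then have i: "1 \<le> i" "Suc i \<le> m" using assms(1) False by auto
  have exc: "pos i < \<pi> (pos i)" and "\<not> pos (Suc i) < \<pi> (pos (Suc i))"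
    using assms i e_kept by auto
  then have "df_letter (pos (Suc i)) < df_letter (pos i)"
    using i kept_letters[of i] kept_letters[of "Suc i"] exc_value_beyond_slot[of i]
    by (cases "\<pi> (pos (Suc i)) = pos (Suc i)") auto
  then show ?thesis using w_less_iff[OF i] by (simp add: not_le)
qed (use w_le_Suc_iff in auto)

lemma rise_is_ascent:
  assumes "i \<le> m" "\<not> e i" "e (Suc i)"
  shows "w i \<le> w (Suc i)"
proof (cases "i = m")
  case False
  have "i \<noteq> 0" using assms(2) e_0 by metis
  then have i: "1 \<le> i" "Suc i \<le> m" using assms(1) False by auto
  have "\<not> pos i < \<pi> (pos i)" and exc: "pos (Suc i) < \<pi> (pos (Suc i))"
    using assms i e_kept by auto
  then have "df_letter (pos i) < df_letter (pos (Suc i))"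
    using i kept_letters[of i] kept_letters[of "Suc i"] pos_less[of i "Suc i"]
    by (cases "\<pi> (pos i) = pos i") auto
  then show ?thesis using w_less_iff[OF i] by (simp add: not_less[symmetric])
qed (simp add: w_Suc_m)

lemma slot_type_eq:
  "i \<le> m \<Longrightarrow> ty i = (if e i \<and> \<not> e (Suc i) then 1 else if \<not> e i \<and> e (Suc i) then 2
     else if w i \<le> w (Suc i) then 3 else 4)"
  unfolding slot_type_def Let_def using fall_is_descent[of i] rise_is_ascent[of i]
  by (auto simp: not_le)

lemma slot_type_1_iff: "i \<le> m \<Longrightarrow> ty i = 1 \<longleftrightarrow> e i \<and> \<not> e (Suc i)"
  using slot_type_eq[of i] by simp

lemma slot_type_2_iff: "i \<le> m \<Longrightarrow> ty i = 2 \<longleftrightarrow> \<not> e i \<and> e (Suc i)"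
  using slot_type_eq[of i] by simp

lemma t_cnt_1_eq_t_cnt_2: "t_cnt 1 n k \<pi> \<phi> = t_cnt 2 n k \<pi> \<phi>"
proof -
  have "t_cnt j n k \<pi> \<phi> = card {i. i < Suc m \<and> ty i = j}" for j
    unfolding t_cnt_def slots_def length_Der by (auto intro!: arg_cong[where f=card])
  moreover have "{i. i < Suc m \<and> ty i = 1} = {i. i < Suc m \<and> e i \<and> \<not> e (Suc i)}"
    and "{i. i < Suc m \<and> ty i = 2} = {i. i < Suc m \<and> \<not> e i \<and> e (Suc i)}"
    using slot_type_1_iff slot_type_2_iff by (auto simp: less_Suc_eq_le)
  ultimately show ?thesis
    using card_falls_eq_card_rises[of e, OF e_0 e_Suc_m] by simp
qed

lemma slots12_alternate:
  assumes "j < length (slots12 n k \<pi> \<phi>)"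
  shows "ty (slots12 n k \<pi> \<phi> ! j) = (if even j then 1 else 2)"
proof -
  define Q where "Q i \<longleftrightarrow> ty i \<in> {1, 2}" for i
  have change_iff: "Q i \<longleftrightarrow> e i \<noteq> e (Suc i)" if "i \<le> m" for i
    using slot_type_eq[OF that] unfolding Q_def by auto
  have slots12: "slots12 n k \<pi> \<phi> = filter Q [0..<Suc m]"
    unfolding slots12_def length_Der Q_def by simp
  define c where "c = slots12 n k \<pi> \<phi> ! j"
  have "c \<in> set (filter Q [0..<Suc m])"
    using assms unfolding c_def slots12 by (rule nth_mem)
  then have c: "c \<le> m" "e c \<noteq> e (Suc c)"
    using change_iff by (auto simp del: upt_Suc)
  have "card {t. t < c \<and> Q t} = j"
    using card_less_filter_upt_nth assms unfolding c_def slots12 by blast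
  moreover have "{t. t < c \<and> Q t} = {t. t < c \<and> e t \<noteq> e (Suc t)}"
    using c change_iff by auto
  ultimately have "e c \<longleftrightarrow> even j"
    using even_card_changes_iff[of e c, OF e_0] by simp
  then show ?thesis
    using c slot_type_1_iff[OF c(1)] slot_type_2_iff[OF c(1)] unfolding c_def[symmetric] by auto
qed

lemma des_word_Der: "des_word (Der n k \<pi> \<phi>) = card der_descents"
proof -
  let ?kept_letters = "map (\<lambda>i. df_letter (pos i)) [1..<m+1]"
  have "Der n k \<pi> \<phi> = map (pos_rank df_letters) ?kept_letters"
    by (rule nth_equalityI) (simp_all add: length_Der Der_nth del: upt_Suc)
  moreover have "set ?kept_letters \<subseteq> set df_letters"
    using pos_bounds df_letter_in_df_letters by (auto simp del: upt_Suc)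
  then have "des_word (map (pos_rank df_letters) ?kept_letters) = des_word ?kept_letters"
    by (intro des_word_map_strict_mono_on monotone_on_subset[OF strict_mono_on_pos_rank])
  ultimately show ?thesis
    by (simp only: des_word_map_upt)
qed

lemma des_word_by_slots:
  assumes "\<And>i. i \<le> m \<Longrightarrow> card (descent_positions n g \<inter> {pos i..<pos (Suc i)})
    = of_bool (i \<in> der_descents) + of_bool (nonempty i \<and> ty i = j) + of_bool (nonempty i \<and> ty i = 3)"
  shows "des_word (map g [1..<n+1])
    = des_word (Der n k \<pi> \<phi>) + t_plus j n k \<pi> \<phi> + t_plus 3 n k \<pi> \<phi>"
proof -
  have t_plus_eq: "t_plus j' n k \<pi> \<phi> = (\<Sum>i\<le>m. of_bool (nonempty i \<and> ty i = j'))" for j'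
    unfolding t_plus_def slots_def length_Der by (auto intro!: arg_cong[where f=card])
  have "(\<Sum>i\<le>m. of_bool (i \<in> der_descents)) = card ({..m} \<inter> der_descents)"
    by simp
  also have "{..m} \<inter> der_descents = der_descents"
    using descent_positions_subset[of m "\<lambda>i. df_letter (pos i)"] by auto
  finally have "card der_descents = (\<Sum>i\<le>m. of_bool (i \<in> der_descents))" ..
  moreover have "des_word (map g [1..<n+1]) = card (descent_positions n g \<inter> {pos 0..<pos (Suc m)})"
    using descent_positions_subset[of n g] pos_0 pos_Suc_m des_word_map_upt
    by (auto intro!: arg_cong[where f=card])
  moreover have "\<dots> = (\<Sum>i\<le>m. card (descent_positions n g \<inter> {pos i..<pos (Suc i)}))"
    by (rule card_Int_atLeastLessThan_split) (auto intro: mono_onI pos_le)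
  ultimately show ?thesis
    using assms by (simp add: sum.distrib t_plus_eq des_word_Der)
qed

lemma pos_in_descents_iff_empty_slot:
  assumes "i \<le> m" "\<not> nonempty i" "\<And>j. 1 \<le> j \<Longrightarrow> j \<le> m \<Longrightarrow> g (pos j) = df_letter (pos j)"
  shows "pos i \<in> descent_positions n g \<longleftrightarrow> i \<in> der_descents"
proof -
  have next_pos: "pos (Suc i) = Suc (pos i)"
    using assms(2) pos_less[of i "Suc i"] assms(1) unfolding slot_nonempty_def by simp
  have "1 \<le> pos i \<longleftrightarrow> 1 \<le> i"
    using pos_0 pos_bounds[of i] assms(1) by (cases i) auto
  moreover have "pos i < n \<longleftrightarrow> i < m"
    using next_pos pos_Suc_m pos_bounds[of "Suc i"] assms(1) by (cases "i = m") auto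
  ultimately show ?thesis
    using assms(3)[of i] assms(3)[of "Suc i"] next_pos
    unfolding descent_positions_def by auto
qed

lemma df_descents_in_slot:
  assumes "i \<le> m"
  shows "descent_positions n df_letter \<inter> {pos i..<pos (Suc i)}
    = {pos i} \<inter> descent_positions n df_letter"
proof -
  have "x \<notin> descent_positions n df_letter" if "pos i < x" "x < pos (Suc i)" for x
    using deleted_inside_slot[OF assms that] deleted_letters(1) df_letter_ge[of "Suc x"]
    unfolding descent_positions_def by fastforce
  then have "descent_positions n df_letter \<inter> {pos i..<pos (Suc i)} \<subseteq> {pos i}"
    by (auto simp: le_less)
  moreover have "pos i \<in> {pos i..<pos (Suc i)}"
    using pos_less assms by simp
  ultimately show ?thesis by blast
qed

lemma pf_descents_in_slot:
  assumes "i \<le> m"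
  shows "descent_positions n pf_letter \<inter> {pos i..<pos (Suc i)}
    = {pos i, pos (Suc i) - 1} \<inter> descent_positions n pf_letter"
proof -
  have "x \<notin> descent_positions n pf_letter" if "pos i < x" "Suc x < pos (Suc i)" for x
    using deleted_inside_slot[OF assms, of x] deleted_inside_slot[OF assms, of "Suc x"] that
      deleted_letters(2) unfolding descent_positions_def by auto
  then have "descent_positions n pf_letter \<inter> {pos i..<pos (Suc i)} \<subseteq> {pos i, pos (Suc i) - 1}"
    by (force simp: le_less)
  moreover have "{pos i, pos (Suc i) - 1} \<subseteq> {pos i..<pos (Suc i)}"
    using pos_less[of i "Suc i"] assms by auto
  ultimately show ?thesis by blast
qed

lemma pos_in_df_descents_iff:
  assumes "i \<le> m" "nonempty i"
  shows "pos i \<in> descent_positions n df_letter \<longleftrightarrow> 1 \<le> i"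
proof -
  have "Suc (pos i) < pos (Suc i)"
    using assms(2) unfolding slot_nonempty_def .
  then have "df_letter (Suc (pos i)) = - int k" "pos i < n"
    using deleted_inside_slot[OF assms(1), of "Suc (pos i)"] deleted_letters(1) by auto
  then show ?thesis
    using pos_0 kept_letters(4)[of i] pos_bounds[of i] assms(1)
    unfolding descent_positions_def by (cases "i = 0") auto
qed

lemma pos_in_pf_descents_iff:
  assumes "i \<le> m" "nonempty i"
  shows "pos i \<in> descent_positions n pf_letter \<longleftrightarrow> 1 \<le> i \<and> e i"
proof (cases "i = 0")
  case False
  then have i: "1 \<le> i" by simp
  have "Suc (pos i) < pos (Suc i)"
    using assms(2) unfolding slot_nonempty_def .
  then have next_letter: "pf_letter (Suc (pos i)) = int (Suc (pos i))" and "pos i < n"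
    using deleted_inside_slot[OF assms(1), of "Suc (pos i)"] deleted_letters(2) by auto
  moreover have "int (Suc (pos i)) < df_letter (pos i) \<longleftrightarrow> pos i < \<pi> (pos i)"
    using kept_letters[OF i assms(1)] exc_value_beyond_slot[OF i assms(1)] \<open>Suc (pos i) < _\<close>
    by (cases "\<pi> (pos i) = pos i") auto
  ultimately show ?thesis
    using i e_kept[OF i assms(1)] kept_letters(1)[OF i assms(1)] pos_bounds[OF i assms(1)]
    unfolding descent_positions_def by auto
qed (simp add: pos_0 descent_positions_def)

lemma slot_last_in_pf_descents_iff:
  assumes "i \<le> m" "nonempty i"
  shows "pos (Suc i) - 1 \<in> descent_positions n pf_letter \<longleftrightarrow> Suc i \<le> m \<and> \<not> e (Suc i)"
proof (cases "i = m")
  case False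
  then have i: "1 \<le> Suc i" "Suc i \<le> m" using assms(1) by auto
  define y where "y = pos (Suc i) - 1"
  have y: "pos i < y" "y < pos (Suc i)" "Suc y = pos (Suc i)"
    using assms(2) unfolding slot_nonempty_def y_def by auto
  then have "pf_letter y = int y" "1 \<le> y" "y < n"
    using deleted_inside_slot[OF assms(1) y(1,2)] deleted_letters(2) pos_bounds[OF i] by auto
  moreover have "df_letter (pos (Suc i)) < int y \<longleftrightarrow> \<not> pos (Suc i) < \<pi> (pos (Suc i))"
    using kept_letters[OF i] deficiency_value_before_slot[OF i] y
    by (cases "\<pi> (pos (Suc i)) = pos (Suc i)") auto
  ultimately show ?thesis
    using i e_kept[OF i] kept_letters(1)[OF i] y(3)
    unfolding descent_positions_def y_def[symmetric] by auto
qed (simp add: pos_Suc_m descent_positions_def)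

(* The left-hand sides count the descents that a nonempty slot creates in df and in pf. *)
lemma df_slot_count:
  assumes "i \<le> m"
  shows "of_bool (1 \<le> i)
    = (of_bool (i \<in> der_descents) + of_bool (ty i = 2) + of_bool (ty i = 3) :: nat)"
  using slot_type_eq[OF assms] w_le_Suc_iff[OF assms] fall_is_descent[OF assms]
    rise_is_ascent[OF assms] e_0
  by (cases "i = 0") (auto simp: descent_positions_def)

lemma pf_slot_count:
  assumes "i \<le> m"
  shows "of_bool (1 \<le> i \<and> e i) + of_bool (Suc i \<le> m \<and> \<not> e (Suc i))
    = (of_bool (i \<in> der_descents) + of_bool (ty i = 1) + of_bool (ty i = 3) :: nat)"
  using slot_type_eq[OF assms] w_le_Suc_iff[OF assms] fall_is_descent[OF assms]
    rise_is_ascent[OF assms] e_0 e_Suc_m assms m_pos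
  by (cases "i = 0"; cases "i = m") (auto simp: descent_positions_def Suc_le_eq)

lemma df_slot_descents:
  assumes "i \<le> m"
  shows "card (descent_positions n df_letter \<inter> {pos i..<pos (Suc i)})
    = of_bool (i \<in> der_descents) + of_bool (nonempty i \<and> ty i = 2) + of_bool (nonempty i \<and> ty i = 3)"
proof (cases "nonempty i")
  case True
  then show ?thesis
    unfolding df_descents_in_slot[OF assms] card_singleton_Int
    using pos_in_df_descents_iff[OF assms True] df_slot_count[OF assms] by simp
next
  case False
  then show ?thesis
    unfolding df_descents_in_slot[OF assms] card_singleton_Int
    using pos_in_descents_iff_empty_slot[OF assms False, of df_letter] by simp
qed

lemma pf_slot_descents:
  assumes "i \<le> m"
  shows "card (descent_positions n pf_letter \<inter> {pos i..<pos (Suc i)})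
    = of_bool (i \<in> der_descents) + of_bool (nonempty i \<and> ty i = 1) + of_bool (nonempty i \<and> ty i = 3)"
proof (cases "nonempty i")
  case True
  then have two_ends: "pos i \<noteq> pos (Suc i) - 1"
    unfolding slot_nonempty_def by simp
  show ?thesis
    unfolding pf_descents_in_slot[OF assms] card_doubleton_Int[OF two_ends]
      pos_in_pf_descents_iff[OF assms True] slot_last_in_pf_descents_iff[OF assms True]
    using True pf_slot_count[OF assms] by simp
next
  case False
  then have "pos (Suc i) - 1 = pos i"
    using pos_less[of i "Suc i"] assms unfolding slot_nonempty_def by simp
  then show ?thesis
    unfolding pf_descents_in_slot[OF assms]
    using False pos_in_descents_iff_empty_slot[OF assms False, of pf_letter] kept_letters(1)
    by (simp add: card_singleton_Int)
qed

lemma des_arr_eq: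
  "des_arr n k \<pi> \<phi> = des_word (Der n k \<pi> \<phi>) + t_plus 1 n k \<pi> \<phi> + t_plus 3 n k \<pi> \<phi>"
  unfolding des_arr_def pf_eq des_word_pos_red by (rule des_word_by_slots) (rule pf_slot_descents)

lemma dez_arr_eq:
  "dez_arr n k \<pi> \<phi> = des_word (Der n k \<pi> \<phi>) + t_plus 2 n k \<pi> \<phi> + t_plus 3 n k \<pi> \<phi>"
  unfolding dez_arr_def df_eq des_word_pos_red df_letters_def
  by (rule des_word_by_slots) (rule df_slot_descents)

end

theorem lemma2p5:
  fixes n k :: nat and \<pi> :: "nat \<Rightarrow> nat" and \<phi> :: "nat \<Rightarrow> int"
  assumes "n \<ge> 1" and "k \<ge> 1"
    and "is_arrangement n k \<pi> \<phi>"
    and "Der n k \<pi> \<phi> \<noteq> []"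
  shows "t_cnt 1 n k \<pi> \<phi> = t_cnt 2 n k \<pi> \<phi>
         \<and> (\<forall>j < length (slots12 n k \<pi> \<phi>).
               slot_type n k \<pi> \<phi> (slots12 n k \<pi> \<phi> ! j) = (if even j then 1 else 2))
         \<and> des_arr n k \<pi> \<phi> = des_word (Der n k \<pi> \<phi>) + t_plus 1 n k \<pi> \<phi> + t_plus 3 n k \<pi> \<phi>
         \<and> dez_arr n k \<pi> \<phi> = des_word (Der n k \<pi> \<phi>) + t_plus 2 n k \<pi> \<phi> + t_plus 3 n k \<pi> \<phi>"
proof -
  interpret arrangement n k \<pi> \<phi>
    using assms(2-4) by unfold_locales
  show ?thesis
    using t_cnt_1_eq_t_cnt_2 slots12_alternate des_arr_eq dez_arr_eq by blast
qed

end
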